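(* Let $\mathbf P=(P,\leq,{}',0,1)$ be an orthogonal lub-complete poset. Then the following conditions are equivalent: (i) $\mathbf P$ is an orthocomplemented poset. (ii) For all $x,y\in P$, $x\leq y$ implies $x\rightarrow_C y=1$.
   Context: $(P,\leq,{}',0,1)$ is a bounded poset with an antitone involution ${}'$ ($x\leq y\Rightarrow y'\leq x'$, $x''=x$). It is orthogonal if $x\leq y'$ implies that the supremum $x\vee y$ exists. It is lub-complete if for every lower bound $x$ of a finite subset $M$ of $P$ there is a maximal lower bound of $M$ above $x$. It is orthocomplemented if $x\vee x'=1$ for every $x\in P$. For $A\subseteq P$, $U(A)$ is the set of upper bounds of $A$, $U(x,y)=U(\{x,y\})$, and $\mathrm{Min}\,A$ is the set of minimal elements of $A$. The classical implication is $x\rightarrow_C y:=\mathrm{Min}\,U(x',y)\subseteq P$; $x\rightarrow_C y=1$ means $x\rightarrow_C y=\{1\}$. *)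

theory Defs
  imports Main
begin

definition bounded_inv_poset :: "('a::order \<Rightarrow> 'a) \<Rightarrow> 'a \<Rightarrow> 'a \<Rightarrow> bool" where
  "bounded_inv_poset c z t \<longleftrightarrow>
     (\<forall>x. z \<le> x \<and> x \<le> t) \<and>
     (\<forall>x y. x \<le> y \<longrightarrow> c y \<le> c x) \<and>
     (\<forall>x. c (c x) = x)"

definition UB :: "'a::order set \<Rightarrow> 'a set" where
  "UB A = {u. \<forall>a\<in>A. a \<le> u}"

definition LB :: "'a::order set \<Rightarrow> 'a set" where
  "LB A = {l. \<forall>a\<in>A. l \<le> a}"

definition MinSet :: "'a::order set \<Rightarrow> 'a set" where
  "MinSet A = {m\<in>A. \<forall>a\<in>A. a \<le> m \<longrightarrow> a = m}"

definition MaxSet :: "'a::order set \<Rightarrow> 'a set" where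
  "MaxSet A = {m\<in>A. \<forall>a\<in>A. m \<le> a \<longrightarrow> a = m}"

definition is_sup2 :: "'a::order \<Rightarrow> 'a \<Rightarrow> 'a \<Rightarrow> bool" where
  "is_sup2 x y s \<longleftrightarrow> s \<in> UB {x, y} \<and> (\<forall>u\<in>UB {x, y}. s \<le> u)"

definition orthogonal :: "('a::order \<Rightarrow> 'a) \<Rightarrow> bool" where
  "orthogonal c \<longleftrightarrow> (\<forall>x y. x \<le> c y \<longrightarrow> (\<exists>s. is_sup2 x y s))"

definition lub_complete :: "'a::order itself \<Rightarrow> bool" where
  "lub_complete _ \<longleftrightarrow>
     (\<forall>(M::'a set) x. finite M \<longrightarrow> x \<in> LB M \<longrightarrow> (\<exists>m\<in>MaxSet (LB M). x \<le> m))"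

definition orthocomplemented :: "('a::order \<Rightarrow> 'a) \<Rightarrow> 'a \<Rightarrow> bool" where
  "orthocomplemented c t \<longleftrightarrow> (\<forall>x. is_sup2 x (c x) t)"

definition implC :: "('a::order \<Rightarrow> 'a) \<Rightarrow> 'a \<Rightarrow> 'a \<Rightarrow> 'a set" where
  "implC c x y = MinSet (UB {c x, y})"

end

theory Submission
  imports Defs
begin

text \<open>The involution is an order anti-automorphism, so it turns lub-completeness into its
dual: every upper bound of a finite set lies above a minimal upper bound. Hence, if
\<open>x \<rightarrow>\<^sub>C x = {1}\<close>, then \<open>1\<close> is the only minimal upper bound of \<open>x, x'\<close> and
therefore their supremum. Conversely, if \<open>x \<squnion> x' = 1\<close> and \<open>x \<le> y\<close>, every upper bound of
\<open>x', y\<close> bounds \<open>x, x'\<close>, so \<open>U(x', y) = {1}\<close>.\<close>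

lemma UB_pair_iff [simp]: "u \<in> UB {a, b} \<longleftrightarrow> a \<le> u \<and> b \<le> u"
  unfolding UB_def by auto

lemma MinSet_singleton [simp]: "MinSet {a} = {a}"
  unfolding MinSet_def by auto

lemma bounded_inv_poset_top: "bounded_inv_poset c z t \<Longrightarrow> x \<le> t"
  unfolding bounded_inv_poset_def by blast

lemma bounded_inv_poset_le_iff:
  assumes "bounded_inv_poset c z t"
  shows "c x \<le> c y \<longleftrightarrow> y \<le> x"
  using assms unfolding bounded_inv_poset_def by metis

lemma bounded_inv_poset_inv:
  assumes "bounded_inv_poset c z t"
  shows "c (c x) = x"
  using assms unfolding bounded_inv_poset_def by blast

lemma UB_iff_LB_image:
  assumes "bounded_inv_poset c z t"
  shows "u \<in> UB M \<longleftrightarrow> c u \<in> LB (c ` M)"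
  unfolding UB_def LB_def using bounded_inv_poset_le_iff [OF assms] by auto

lemma MinSet_UB_iff_MaxSet_LB_image:
  assumes inv_poset: "bounded_inv_poset c z t"
  shows "m \<in> MinSet (UB M) \<longleftrightarrow> c m \<in> MaxSet (LB (c ` M))"
proof -
  have "(\<forall>a\<in>UB M. a \<le> m \<longrightarrow> a = m) \<longleftrightarrow> (\<forall>l\<in>LB (c ` M). c m \<le> l \<longrightarrow> l = c m)"
  proof
    assume min: "\<forall>a\<in>UB M. a \<le> m \<longrightarrow> a = m"
    show "\<forall>l\<in>LB (c ` M). c m \<le> l \<longrightarrow> l = c m"
    proof (intro ballI impI)
      fix l assume "l \<in> LB (c ` M)" "c m \<le> l"
      then have "c l \<in> UB M" "c l \<le> m"
        using UB_iff_LB_image [OF inv_poset] bounded_inv_poset_le_iff [OF inv_poset]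
          bounded_inv_poset_inv [OF inv_poset] by metis+
      with min show "l = c m"
        using bounded_inv_poset_inv [OF inv_poset] by metis
    qed
  next
    assume max: "\<forall>l\<in>LB (c ` M). c m \<le> l \<longrightarrow> l = c m"
    show "\<forall>a\<in>UB M. a \<le> m \<longrightarrow> a = m"
      using max UB_iff_LB_image [OF inv_poset] bounded_inv_poset_le_iff [OF inv_poset]
        bounded_inv_poset_inv [OF inv_poset] by metis
  qed
  then show ?thesis
    unfolding MinSet_def MaxSet_def using UB_iff_LB_image [OF inv_poset] by blast
qed

lemma lub_complete_above_MinSet_UB:
  fixes c :: "'a::order \<Rightarrow> 'a" and M :: "'a set"
  assumes inv_poset: "bounded_inv_poset c z t"
    and "lub_complete TYPE('a)"
    and "finite M" "u \<in> UB M"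
  shows "\<exists>m\<in>MinSet (UB M). m \<le> u"
proof -
  have "c u \<in> LB (c ` M)"
    using assms(4) UB_iff_LB_image [OF inv_poset] by blast
  then obtain l where "l \<in> MaxSet (LB (c ` M))" "c u \<le> l"
    using assms(2,3) unfolding lub_complete_def by blast
  then have "c l \<in> MinSet (UB M)" "c l \<le> u"
    using MinSet_UB_iff_MaxSet_LB_image [OF inv_poset] bounded_inv_poset_le_iff [OF inv_poset]
      bounded_inv_poset_inv [OF inv_poset] by metis+
  then show ?thesis by blast
qed

lemma is_sup2_if_MinSet_UB_singleton:
  assumes "MinSet (UB {a, b}) = {s}"
    and "\<And>u. u \<in> UB {a, b} \<Longrightarrow> \<exists>m\<in>MinSet (UB {a, b}). m \<le> u"
  shows "is_sup2 a b s"
  using assms unfolding is_sup2_def by (auto simp: MinSet_def)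

lemma orthocomplemented_UB_compl_above:
  assumes "bounded_inv_poset c z t" "orthocomplemented c t" "x \<le> y"
  shows "UB {c x, y} = {t}"
proof -
  have "t \<le> u" if "c x \<le> u" "y \<le> u" for u
  proof -
    have "x \<le> u" using assms(3) that(2) by (rule order_trans)
    with that(1) show ?thesis
      using assms(2) unfolding orthocomplemented_def is_sup2_def by simp
  qed
  then show ?thesis
    using bounded_inv_poset_top [OF assms(1)] by (auto intro: antisym)
qed

theorem theorem1:
  fixes c :: "'a::order \<Rightarrow> 'a" and z t :: 'a
  assumes "bounded_inv_poset c z t"
    and "orthogonal c"
    and "lub_complete TYPE('a)"
  shows "orthocomplemented c t \<longleftrightarrow> (\<forall>x y. x \<le> y \<longrightarrow> implC c x y = {t})"
proof
  assume "orthocomplemented c t"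
  then show "\<forall>x y. x \<le> y \<longrightarrow> implC c x y = {t}"
    using orthocomplemented_UB_compl_above [OF assms(1)] by (simp add: implC_def)
next
  assume impl: "\<forall>x y. x \<le> y \<longrightarrow> implC c x y = {t}"
  have "is_sup2 x (c x) t" for x
  proof (rule is_sup2_if_MinSet_UB_singleton)
    show "MinSet (UB {x, c x}) = {t}"
      using impl by (simp add: implC_def insert_commute)
    show "\<exists>m\<in>MinSet (UB {x, c x}). m \<le> u" if "u \<in> UB {x, c x}" for u
      using lub_complete_above_MinSet_UB [OF assms(1,3) _ that] by simp
  qed
  then show "orthocomplemented c t"
    unfolding orthocomplemented_def by blast
qed

end
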